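(* Consider $N$ classical particles with Hamiltonian $$H=\sum_{i=1}^N\frac{(\mathbf p_i-q_i\boldsymbol A(\mathbf x_i))^2}{2m_i}+\sum_{i<j}v(|\mathbf x_i-\mathbf x_j|),$$ where $v$ is a pair potential and $\boldsymbol A$ is a vector potential of a constant magnetic field $\boldsymbol B=\nabla\times\boldsymbol A$. Choose an orthonormal coordinate frame whose third axis is parallel to $\boldsymbol B$. For every $a,b\in\mathbb R$ with $a^2+b^2=1$ let $$\mathcal M_m=\begin{pmatrix}a&b&0\\ b&-a&0\\0&0&1\end{pmatrix}$$ (so $\mathcal M_m\in O(3)$, $\mathcal M_m^2=I$, $\det\mathcal M_m=-1$), and let $\mathcal M$ act on each particle as $(\mathbf x_i,\mathbf p_i)\mapsto(\mathcal M_m\mathbf x_i,-\mathcal M_m\mathbf p_i)$. Then each such $\mathcal M$ is a time reversal operation under which the dynamics is time reversal invariant; in particular the dynamics is invariant under infinitely many time reversal operations.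
   Context: A time reversal operation is a linear antisymplectic involution of phase space. Time reversal invariance under $\mathcal M$ means the Hamiltonian is preserved up to a gauge transformation: there is a smooth $G:\mathbb R^3\to\mathbb R$ such that $H(\mathcal M\Gamma)$ equals $H(\Gamma)$ with $\boldsymbol A$ replaced by $\boldsymbol A+\nabla G$, for all $\Gamma$. *)

theory Defs
  imports "HOL-Analysis.Analysis"
begin

text \<open>Phase space of N particles: each particle (indexed by the finite linearly ordered
type 'n, so N = CARD('n)) carries a position and a momentum in R^3.\<close>

type_synonym 'n phase = "((real^3) \<times> (real^3))^'n"

definition pos :: "'n::finite phase \<Rightarrow> 'n \<Rightarrow> real^3" where
  "pos \<Gamma> i = fst (\<Gamma> $ i)"

definition mom :: "'n::finite phase \<Rightarrow> 'n \<Rightarrow> real^3" where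
  "mom \<Gamma> i = snd (\<Gamma> $ i)"

fun diter :: "(real^3 \<Rightarrow> 'b::real_normed_vector) \<Rightarrow> (real^3) list \<Rightarrow> real^3 \<Rightarrow> 'b" where
  "diter f [] = f"
| "diter f (v # vs) = (\<lambda>x. frechet_derivative (diter f vs) (at x) v)"

definition smooth :: "(real^3 \<Rightarrow> 'b::real_normed_vector) \<Rightarrow> bool" where
  "smooth f \<longleftrightarrow> (\<forall>vs x. diter f vs differentiable (at x))"

definition pd :: "(real^3 \<Rightarrow> real^3) \<Rightarrow> 3 \<Rightarrow> 3 \<Rightarrow> real^3 \<Rightarrow> real" where
  "pd A i j x = frechet_derivative A (at x) (axis j 1) $ i"

definition grad :: "(real^3 \<Rightarrow> real) \<Rightarrow> real^3 \<Rightarrow> real^3" where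
  "grad G x = (\<chi> k. frechet_derivative G (at x) (axis k 1))"

definition curl :: "(real^3 \<Rightarrow> real^3) \<Rightarrow> real^3 \<Rightarrow> real^3" where
  "curl A x = vector [pd A 3 2 x - pd A 2 3 x, pd A 1 3 x - pd A 3 1 x, pd A 2 1 x - pd A 1 2 x]"

definition hamiltonian ::
  "('n::{finite,linorder} \<Rightarrow> real) \<Rightarrow> ('n \<Rightarrow> real) \<Rightarrow> (real \<Rightarrow> real) \<Rightarrow> (real^3 \<Rightarrow> real^3)
     \<Rightarrow> 'n phase \<Rightarrow> real" where
  "hamiltonian m q v A \<Gamma> =
     (\<Sum>i\<in>UNIV. (norm (mom \<Gamma> i - q i *\<^sub>R A (pos \<Gamma> i)))\<^sup>2 / (2 * m i))
     + (\<Sum>(i,j)\<in>{(i,j). i < j}. v (norm (pos \<Gamma> i - pos \<Gamma> j)))"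

definition symp :: "'n::finite phase \<Rightarrow> 'n phase \<Rightarrow> real" where
  "symp \<Gamma> \<Gamma>' = (\<Sum>i\<in>UNIV. pos \<Gamma> i \<bullet> mom \<Gamma>' i - mom \<Gamma> i \<bullet> pos \<Gamma>' i)"

definition time_reversal_op :: "('n::finite phase \<Rightarrow> 'n phase) \<Rightarrow> bool" where
  "time_reversal_op T \<longleftrightarrow> linear T \<and> T \<circ> T = id \<and>
     (\<forall>\<Gamma> \<Gamma>'. symp (T \<Gamma>) (T \<Gamma>') = - symp \<Gamma> \<Gamma>')"

text \<open>Time reversal invariance under T: H is preserved up to a gauge transformation.\<close>

definition tr_invariant ::
  "('n::{finite,linorder} \<Rightarrow> real) \<Rightarrow> ('n \<Rightarrow> real) \<Rightarrow> (real \<Rightarrow> real) \<Rightarrow> (real^3 \<Rightarrow> real^3)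
     \<Rightarrow> ('n phase \<Rightarrow> 'n phase) \<Rightarrow> bool" where
  "tr_invariant m q v A T \<longleftrightarrow>
     (\<exists>G :: real^3 \<Rightarrow> real. smooth G \<and>
        (\<forall>\<Gamma>. hamiltonian m q v A (T \<Gamma>) = hamiltonian m q v (\<lambda>x. A x + grad G x) \<Gamma>))"

definition Mm :: "real \<Rightarrow> real \<Rightarrow> real^3^3" where
  "Mm a b = vector [vector [a, b, 0], vector [b, -a, 0], vector [0, 0, 1]]"

definition Mphase :: "real \<Rightarrow> real \<Rightarrow> 'n::finite phase \<Rightarrow> 'n phase" where
  "Mphase a b \<Gamma> = (\<chi> i. (Mm a b *v pos \<Gamma> i, - (Mm a b *v mom \<Gamma> i)))"

end

theory Submission
  imports Defs
begin

text \<open>Write \<open>M = Mm a b\<close>, a symmetric orthogonal involution. In the reflected state the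
  kinetic energy of a particle is \<open>|-M p - q A(M x)|\<^sup>2 = |p + q M A(M x)|\<^sup>2\<close> and the pair
  distances are unchanged, so the Hamiltonian is the original one for the vector potential
  \<open>-M A(M x)\<close>. Since \<open>det M = -1\<close> and \<open>M\<close> fixes the field axis, \<open>x \<mapsto> M A(M x)\<close> has curl
  \<open>-B\<close>; hence \<open>F = A + M A(M \<cdot>)\<close> is curl-free, i.e. its Jacobian is symmetric, and on the
  star-shaped domain \<open>\<real>\<^sup>3\<close> it is the gradient of a smooth \<open>-G\<close>. Then \<open>A + \<nabla>G = -M A(M \<cdot>)\<close>
  is the required gauge. Infinitely many reflections arise because \<open>a\<close> ranges over \<open>[0, 1]\<close>.\<close>

lemma radial_integral_symmetric_derivative:
  fixes F :: "'a::euclidean_space \<Rightarrow> 'a"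
  assumes deriv: "\<And>x. (F has_derivative DF x) (at x)"
    and sym: "\<And>x u w. DF x u \<bullet> w = DF x w \<bullet> u"
  shows "((\<lambda>t. F (t *\<^sub>R x) \<bullet> h + t * (DF (t *\<^sub>R x) h \<bullet> x)) has_integral F x \<bullet> h) {0..1}"
proof -
  have "((\<lambda>t. t * (F (t *\<^sub>R x) \<bullet> h)) has_vector_derivative
          F (t *\<^sub>R x) \<bullet> h + t * (DF (t *\<^sub>R x) h \<bullet> x)) (at t within {0..1})" for t
  proof -
    have lin: "linear (DF (t *\<^sub>R x))"
      using deriv has_derivative_linear by blast
    have "((\<lambda>t. F (t *\<^sub>R x)) has_derivative (\<lambda>s. DF (t *\<^sub>R x) (s *\<^sub>R x))) (at t within {0..1})"
      by (rule has_derivative_compose[of "\<lambda>t. t *\<^sub>R x", OF _ has_derivative_at_withinI[OF deriv]])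
         (auto intro!: derivative_eq_intros)
    then have "((\<lambda>t. t * (F (t *\<^sub>R x) \<bullet> h)) has_derivative
        (\<lambda>s. t * (DF (t *\<^sub>R x) (s *\<^sub>R x) \<bullet> h) + s * (F (t *\<^sub>R x) \<bullet> h))) (at t within {0..1})"
      by (auto intro!: derivative_eq_intros)
    then show ?thesis
      by (simp add: has_vector_derivative_def linear_cmul[OF lin] sym[of _ x h] algebra_simps)
  qed
  from fundamental_theorem_of_calculus[OF _ this] show ?thesis
    by simp
qed

lemma has_derivative_radial_integral:
  fixes F :: "'a::euclidean_space \<Rightarrow> 'a"
  assumes deriv: "\<And>x. (F has_derivative DF x) (at x)"
    and cont: "\<And>v. continuous_on UNIV (\<lambda>x. DF x v)"
  shows "((\<lambda>x. integral {0..1} (\<lambda>t. F (t *\<^sub>R x) \<bullet> x)) has_derivative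
           (\<lambda>h. integral {0..1} (\<lambda>t. F (t *\<^sub>R x) \<bullet> h + t * (DF (t *\<^sub>R x) h \<bullet> x)))) (at x)"
proof -
  define g where "g x t = (\<lambda>h. F (t *\<^sub>R x) \<bullet> h + t * (DF (t *\<^sub>R x) h \<bullet> x))" for x t
  have bl: "bounded_linear (DF y)" for y
    using deriv has_derivative_bounded_linear by blast
  have contF: "continuous_on UNIV F"
    using deriv by (meson continuous_at_imp_continuous_on has_derivative_continuous)
  have "bounded_linear (g x t)" for x t
    unfolding g_def
    by (intro bounded_linear_add bounded_linear_const_mult bounded_linear_inner_right
        bounded_linear_compose[OF bounded_linear_inner_left bl])
  then have g_Blinfun: "blinfun_apply (Blinfun (g x t)) = g x t" for x t
    by (simp add: bounded_linear_Blinfun_apply)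
  have d_integrand: "((\<lambda>x. F (t *\<^sub>R x) \<bullet> x) has_derivative blinfun_apply (Blinfun (g x t)))
      (at x within UNIV)" for x t
  proof -
    have "((\<lambda>x. F (t *\<^sub>R x)) has_derivative (\<lambda>h. DF (t *\<^sub>R x) (t *\<^sub>R h))) (at x)"
      by (rule has_derivative_compose[of "\<lambda>x. t *\<^sub>R x", OF _ deriv])
         (auto intro!: derivative_eq_intros)
    from has_derivative_inner[OF this has_derivative_ident] show ?thesis
      unfolding g_Blinfun unfolding g_def using bl[of "t *\<^sub>R x"]
      by (simp add: linear_cmul bounded_linear.linear)
  qed
  have cont_g: "continuous_on UNIV (\<lambda>(x, t). g x t h)" for h
  proof -
    have scale: "continuous_on UNIV (\<lambda>y::'a \<times> real. snd y *\<^sub>R fst y)"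
      by (intro continuous_intros)
    show ?thesis
      unfolding g_def case_prod_beta
      by (intro continuous_intros continuous_on_compose2[OF cont scale]
          continuous_on_compose2[OF contF scale]) auto
  qed
  have cont_Blinfun: "continuous_on (UNIV \<times> cbox 0 1) (\<lambda>(x, t). Blinfun (g x t))"
    by (rule continuous_on_blinfun_componentwise, rule continuous_on_subset[OF _ subset_UNIV])
       (simp add: case_prod_beta g_Blinfun cont_g[unfolded case_prod_beta])
  have "(\<lambda>t. F (t *\<^sub>R x) \<bullet> x) integrable_on cbox 0 1" for x
    by (intro integrable_continuous continuous_intros continuous_on_compose2[OF contF]) auto
  from leibniz_rule[OF d_integrand this cont_Blinfun]
  have deriv_integral: "((\<lambda>x. integral (cbox 0 1) (\<lambda>t. F (t *\<^sub>R x) \<bullet> x)) has_derivative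
      integral (cbox 0 1) (\<lambda>t. Blinfun (g x t))) (at x)"
    by simp
  have "continuous_on (cbox 0 1) (\<lambda>t. Blinfun (g x t))"
    using continuous_on_compose2[OF cont_Blinfun, where f="\<lambda>t. (x, t)" and s="cbox 0 1"]
    by (auto simp add: continuous_on_Pair continuous_on_const continuous_on_id)
  then have "blinfun_apply (integral (cbox 0 1) (\<lambda>t. Blinfun (g x t)))
      = (\<lambda>h. integral (cbox 0 1) (\<lambda>t. g x t h))"
    by (simp only: fun_eq_iff blinfun_apply_integral[OF integrable_continuous] g_Blinfun) simp
  with deriv_integral show ?thesis
    by (simp add: g_def)
qed

text \<open>The potential is \<open>G x = \<integral>\<^sub>0\<^sup>1 F(t x) \<bullet> x dt\<close>: differentiating under the integral gives
  the integrand of the previous lemma, which by symmetry of \<open>DF\<close> integrates to \<open>F x \<bullet> h\<close>.\<close>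

lemma symmetric_derivative_imp_potential:
  fixes F :: "'a::euclidean_space \<Rightarrow> 'a"
  assumes deriv: "\<And>x. (F has_derivative DF x) (at x)"
    and cont: "\<And>v. continuous_on UNIV (\<lambda>x. DF x v)"
    and sym: "\<And>x u w. DF x u \<bullet> w = DF x w \<bullet> u"
  obtains G where "\<And>x. (G has_derivative (\<lambda>h. F x \<bullet> h)) (at x)"
proof
  show "((\<lambda>x. integral {0..1} (\<lambda>t. F (t *\<^sub>R x) \<bullet> x)) has_derivative (\<lambda>h. F x \<bullet> h)) (at x)" for x
    using has_derivative_radial_integral[OF deriv cont]
      radial_integral_symmetric_derivative[OF deriv sym, THEN integral_unique]
    by simp
qed

lemma diter_snoc: "diter f (vs @ [v]) = diter (diter f [v]) vs"
  by (induction vs) auto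

lemma smooth_has_derivative:
  "smooth f \<Longrightarrow> (diter f vs has_derivative (\<lambda>h. diter f (h # vs) x)) (at x)"
  unfolding smooth_def using frechet_derivative_works by auto

lemma smooth_diter: "smooth f \<Longrightarrow> smooth (diter f [v])"
  unfolding smooth_def by (metis diter_snoc)

lemma smoothI:
  assumes "\<And>x. f differentiable (at x)" and "\<And>v. smooth (diter f [v])"
  shows "smooth f"
  unfolding smooth_def
proof (intro allI)
  fix vs x
  show "diter f vs differentiable at x"
  proof (cases vs rule: rev_cases)
    case Nil
    then show ?thesis using assms(1) by simp
  next
    case (snoc ys y)
    then show ?thesis using assms(2)[of y] by (simp add: diter_snoc smooth_def)
  qed
qed

lemma smooth_continuous:
  assumes "smooth f"
  shows "continuous_on UNIV f"
proof -
  have "f differentiable at x" for x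
    using assms diter.simps(1) unfolding smooth_def by metis
  then show ?thesis
    by (meson continuous_at_imp_continuous_on differentiable_imp_continuous_within)
qed

lemma smooth_derivative_continuous:
  assumes "smooth f" and "\<And>x. (f has_derivative D x) (at x)"
  shows "continuous_on UNIV (\<lambda>x. D x v)"
proof -
  have "D x v = diter f [v] x" for x
    using frechet_derivative_at[OF assms(2)] by simp
  then show ?thesis
    using smooth_continuous[OF smooth_diter[OF assms(1)]] by simp
qed

lemma smooth_bounded_linear_comp:
  assumes L: "bounded_linear L" and f: "smooth f"
  shows "smooth (\<lambda>x. L (f x))"
proof -
  have diter_L: "diter (\<lambda>x. L (f x)) vs = (\<lambda>x. L (diter f vs x))" for vs
  proof (induction vs)
    case (Cons w vs)
    have "frechet_derivative (\<lambda>x. L (diter f vs x)) (at x) w = L (diter f (w # vs) x)" for x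
      using bounded_linear.has_derivative[OF L smooth_has_derivative[OF f, of vs x]]
      by (simp add: frechet_derivative_at[symmetric])
    then show ?case by (simp only: diter.simps Cons.IH)
  qed simp
  show ?thesis
    unfolding smooth_def diter_L differentiable_def
    using bounded_linear.has_derivative[OF L smooth_has_derivative[OF f]] by blast
qed

lemma smooth_comp_linear:
  fixes M :: "real^3 \<Rightarrow> real^3"
  assumes M: "linear M" and f: "smooth f"
  shows "smooth (\<lambda>x. f (M x))"
proof -
  have D: "((\<lambda>x. diter f vs (M x)) has_derivative (\<lambda>h. diter f (M h # vs) (M x))) (at x)" for vs x
    using has_derivative_compose[OF linear_imp_has_derivative[OF M] smooth_has_derivative[OF f]]
    by (simp add: o_def)
  have diter_M: "diter (\<lambda>x. f (M x)) vs = (\<lambda>x. diter f (map M vs) (M x))" for vs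
  proof (induction vs)
    case (Cons w vs)
    have "frechet_derivative (\<lambda>x. diter f (map M vs) (M x)) (at x) w = diter f (map M (w # vs)) (M x)" for x
      using D[of "map M vs" x] by (simp add: frechet_derivative_at[symmetric])
    then show ?case by (simp only: diter.simps Cons.IH)
  qed simp
  show ?thesis
    unfolding smooth_def diter_M differentiable_def using D by blast
qed

lemma smooth_add:
  assumes f: "smooth f" and g: "smooth g"
  shows "smooth (\<lambda>x. f x + g x)"
proof -
  have D: "((\<lambda>x. diter f vs x + diter g vs x) has_derivative
      (\<lambda>h. diter f (h # vs) x + diter g (h # vs) x)) (at x)" for vs x
    using has_derivative_add[OF smooth_has_derivative[OF f] smooth_has_derivative[OF g]] .
  have diter_add: "diter (\<lambda>x. f x + g x) vs = (\<lambda>x. diter f vs x + diter g vs x)" for vs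
  proof (induction vs)
    case (Cons w vs)
    have "frechet_derivative (\<lambda>x. diter f vs x + diter g vs x) (at x) w
        = diter f (w # vs) x + diter g (w # vs) x" for x
      using D[of vs x] by (simp add: frechet_derivative_at[symmetric])
    then show ?case by (simp only: diter.simps Cons.IH)
  qed simp
  show ?thesis
    unfolding smooth_def diter_add differentiable_def using D by blast
qed

lemma smooth_potential:
  fixes G :: "real^3 \<Rightarrow> real"
  assumes deriv: "\<And>x. (G has_derivative (\<lambda>h. g x \<bullet> h)) (at x)" and g: "smooth g"
  shows "smooth G"
proof (rule smoothI)
  show "G differentiable at x" for x
    using deriv by (auto simp: differentiable_def)
  have "diter G [w] = (\<lambda>x. g x \<bullet> w)" for w
    using frechet_derivative_at[OF deriv] by (simp add: fun_eq_iff)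
  then show "smooth (diter G [w])" for w
    using smooth_bounded_linear_comp[OF bounded_linear_inner_left g] by simp
qed

lemma grad_eqI:
  assumes "(G has_derivative (\<lambda>h. g \<bullet> h)) (at x)"
  shows "grad G x = g"
  using frechet_derivative_at[OF assms, symmetric] by (simp add: grad_def vec_eq_iff inner_axis)

lemma inner_real3: "(x::real^3) \<bullet> y = x$1 * y$1 + x$2 * y$2 + x$3 * y$3"
  by (simp add: inner_vec_def sum_3)

lemma constant_curl_skew:
  fixes A :: "real^3 \<Rightarrow> real^3"
  assumes deriv: "(A has_derivative D) (at x)" and curl: "curl A x = vector [0, 0, B0]"
  shows "D u \<bullet> w - D w \<bullet> u = B0 * (u$1 * w$2 - u$2 * w$1)"
proof -
  have lin: "linear D"
    using deriv has_derivative_linear by blast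
  have pd: "pd A i j x = D (axis j 1) $ i" for i j
    unfolding pd_def using frechet_derivative_at[OF deriv] by simp
  have curl_nth: "pd A 3 2 x - pd A 2 3 x = 0" "pd A 1 3 x - pd A 3 1 x = 0"
    "pd A 2 1 x - pd A 1 2 x = B0"
    using curl by (simp_all add: curl_def vec_eq_iff forall_3)
  have D_coords: "D v = v$1 *\<^sub>R D (axis 1 1) + v$2 *\<^sub>R D (axis 2 1) + v$3 *\<^sub>R D (axis 3 1)" for v
  proof -
    have "v = v$1 *\<^sub>R axis 1 1 + v$2 *\<^sub>R axis 2 1 + v$3 *\<^sub>R axis 3 1"
      by (simp add: vec_eq_iff forall_3 axis_def)
    from arg_cong[where f=D, OF this] show ?thesis
      by (simp only: linear_add[OF lin] linear_cmul[OF lin])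
  qed
  show ?thesis
    using curl_nth unfolding pd by (simp add: D_coords[of u] D_coords[of w] inner_real3 algebra_simps)
qed

lemma matrix_vector_mult_uminus: "(A::'a::ring_1^'n^'m) *v (- x) = - (A *v x)"
  by (simp add: vec_eq_iff matrix_vector_mult_def sum_negf)

lemma Mm_mult_vector: "Mm a b *v y = vector [a * y$1 + b * y$2, b * y$1 - a * y$2, y$3]"
  by (simp add: vec_eq_iff forall_3 Mm_def matrix_vector_mult_def sum_3)

lemma Mm_mult_vector_nth [simp]:
  "(Mm a b *v y)$1 = a * y$1 + b * y$2" "(Mm a b *v y)$2 = b * y$1 - a * y$2" "(Mm a b *v y)$3 = y$3"
  by (simp_all add: Mm_mult_vector)

lemma inner_Mm_left: "(Mm a b *v y) \<bullet> w = y \<bullet> (Mm a b *v w)"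
  by (simp add: inner_real3 algebra_simps)

lemma Mm_Mm_mult_vector:
  assumes "a\<^sup>2 + b\<^sup>2 = 1"
  shows "Mm a b *v (Mm a b *v y) = y"
proof -
  have "a * (a * y$1 + b * y$2) + b * (b * y$1 - a * y$2) = (a\<^sup>2 + b\<^sup>2) * y$1"
    "b * (a * y$1 + b * y$2) - a * (b * y$1 - a * y$2) = (a\<^sup>2 + b\<^sup>2) * y$2"
    by (simp_all add: algebra_simps power2_eq_square)
  then show ?thesis
    using assms by (simp add: vec_eq_iff forall_3)
qed

lemma inner_Mm_Mm: "a\<^sup>2 + b\<^sup>2 = 1 \<Longrightarrow> (Mm a b *v x) \<bullet> (Mm a b *v y) = x \<bullet> y"
  by (simp add: inner_Mm_left Mm_Mm_mult_vector)

lemma norm_Mm: "a\<^sup>2 + b\<^sup>2 = 1 \<Longrightarrow> norm (Mm a b *v x) = norm x"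
  by (simp add: norm_eq_sqrt_inner inner_Mm_Mm)

lemma Mm_Mm: "a\<^sup>2 + b\<^sup>2 = 1 \<Longrightarrow> Mm a b ** Mm a b = mat 1"
  by (simp add: matrix_eq matrix_vector_mul_assoc[symmetric] Mm_Mm_mult_vector)

lemma transpose_Mm: "transpose (Mm a b) = Mm a b"
  by (simp add: Mm_def vec_eq_iff forall_3 transpose_def)

lemma orthogonal_matrix_Mm: "a\<^sup>2 + b\<^sup>2 = 1 \<Longrightarrow> orthogonal_matrix (Mm a b)"
  by (simp add: orthogonal_matrix_def transpose_Mm Mm_Mm)

lemma det_Mm: "a\<^sup>2 + b\<^sup>2 = 1 \<Longrightarrow> det (Mm a b) = -1"
  by (simp add: det_3 Mm_def power2_eq_square algebra_simps)

lemma pos_Mphase [simp]: "pos (Mphase a b \<Gamma>) i = Mm a b *v pos \<Gamma> i"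
  by (simp add: Mphase_def pos_def)

lemma mom_Mphase [simp]: "mom (Mphase a b \<Gamma>) i = - (Mm a b *v mom \<Gamma> i)"
  by (simp add: Mphase_def mom_def)

lemma time_reversal_op_Mphase:
  assumes h: "a\<^sup>2 + b\<^sup>2 = 1"
  shows "time_reversal_op (Mphase a b :: 'n::finite phase \<Rightarrow> 'n phase)"
  unfolding time_reversal_op_def
proof (intro conjI allI)
  show "linear (Mphase a b :: 'n phase \<Rightarrow> 'n phase)"
    by (rule linearI)
       (simp_all add: Mphase_def pos_def mom_def vec_eq_iff matrix_vector_right_distrib
          matrix_vector_mult_scaleR)
  show "Mphase a b \<circ> Mphase a b = (id :: 'n phase \<Rightarrow> 'n phase)"
    by (simp add: fun_eq_iff Mphase_def vec_eq_iff pos_def mom_def matrix_vector_mult_uminus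
        Mm_Mm_mult_vector[OF h])
  show "symp (Mphase a b \<Gamma>) (Mphase a b \<Gamma>') = - symp \<Gamma> \<Gamma>'" for \<Gamma> \<Gamma>' :: "'n phase"
    by (simp add: symp_def inner_Mm_Mm[OF h] sum_negf[symmetric])
qed

lemma symmetric_derivative_add_reflected:
  fixes A :: "real^3 \<Rightarrow> real^3"
  assumes h: "a\<^sup>2 + b\<^sup>2 = 1"
    and deriv: "\<And>x. (A has_derivative DA x) (at x)"
    and curl: "\<And>x. curl A x = vector [0, 0, B0]"
  defines "M \<equiv> Mm a b"
  shows "(DA x u + M *v DA (M *v x) (M *v u)) \<bullet> w = (DA x w + M *v DA (M *v x) (M *v w)) \<bullet> u"
proof -
  define \<omega> where "\<omega> = u$1 * w$2 - u$2 * w$1"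
  have "(M *v u)$1 * (M *v w)$2 - (M *v u)$2 * (M *v w)$1 = - (a\<^sup>2 + b\<^sup>2) * \<omega>"
    unfolding M_def \<omega>_def by (simp add: algebra_simps power2_eq_square)
  then have orientation: "(M *v u)$1 * (M *v w)$2 - (M *v u)$2 * (M *v w)$1 = - \<omega>"
    using h by simp
  have "DA (M *v x) (M *v u) \<bullet> (M *v w) - DA (M *v x) (M *v w) \<bullet> (M *v u)
      = B0 * ((M *v u)$1 * (M *v w)$2 - (M *v u)$2 * (M *v w)$1)"
    by (rule constant_curl_skew[OF deriv curl])
  also have "\<dots> = - (B0 * \<omega>)"
    unfolding orientation by simp
  finally have "DA (M *v x) (M *v u) \<bullet> (M *v w) - DA (M *v x) (M *v w) \<bullet> (M *v u) = - (B0 * \<omega>)" .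
  then show ?thesis
    using constant_curl_skew[OF deriv curl, where x=x and u=u and w=w]
    unfolding \<omega>_def inner_add_left M_def inner_Mm_left by linarith
qed

lemma reflection_gauge:
  fixes A :: "real^3 \<Rightarrow> real^3"
  assumes h: "a\<^sup>2 + b\<^sup>2 = 1"
    and A_smooth: "smooth A"
    and curl: "\<And>x. curl A x = vector [0, 0, B0]"
  obtains G where "smooth G" and "\<And>x. A x + grad G x = - (Mm a b *v A (Mm a b *v x))"
proof -
  define M where "M = Mm a b"
  define DA where "DA x = frechet_derivative A (at x)" for x
  define F where "F x = A x + M *v A (M *v x)" for x
  define DF where "DF x h = DA x h + M *v DA (M *v x) (M *v h)" for x h
  have lin_M: "linear ((*v) M)"
    by (rule matrix_vector_mul_linear)
  then have bl_M: "bounded_linear ((*v) M)"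
    by (rule linear_conv_bounded_linear[THEN iffD1])
  have deriv_A: "(A has_derivative DA x) (at x)" for x
    using smooth_has_derivative[OF A_smooth, of "[]" x] by (simp add: DA_def)
  have deriv_F: "(F has_derivative DF x) (at x)" for x
  proof -
    have "((\<lambda>x. A (M *v x)) has_derivative (\<lambda>h. DA (M *v x) (M *v h))) (at x)"
      using has_derivative_compose[OF linear_imp_has_derivative[OF lin_M] deriv_A]
      by (simp add: o_def)
    from has_derivative_add[OF deriv_A bounded_linear.has_derivative[OF bl_M this]]
    show ?thesis
      unfolding F_def DF_def .
  qed
  have "smooth (\<lambda>x. M *v A (M *v x))"
    by (rule smooth_bounded_linear_comp[OF bl_M smooth_comp_linear[OF lin_M A_smooth]])
  then have smooth_F: "smooth F"
    unfolding F_def by (rule smooth_add[OF A_smooth])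
  have "DF x u \<bullet> w = DF x w \<bullet> u" for x u w
    unfolding DF_def M_def by (rule symmetric_derivative_add_reflected[OF h deriv_A curl])
  then obtain G0 where G0: "\<And>x. (G0 has_derivative (\<lambda>h. F x \<bullet> h)) (at x)"
    using symmetric_derivative_imp_potential[OF deriv_F smooth_derivative_continuous[OF smooth_F deriv_F]]
    by blast
  have deriv_G: "((\<lambda>x. - G0 x) has_derivative (\<lambda>h. - F x \<bullet> h)) (at x)" for x
    using has_derivative_minus[OF G0] by simp
  show ?thesis
  proof
    show "smooth (\<lambda>x. - G0 x)"
      by (rule smooth_potential[OF deriv_G smooth_bounded_linear_comp[OF bounded_linear_minus[OF
            bounded_linear_ident] smooth_F]])
    show "A x + grad (\<lambda>x. - G0 x) x = - (Mm a b *v A (Mm a b *v x))" for x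
      by (simp add: grad_eqI[OF deriv_G] F_def M_def)
  qed
qed

lemma tr_invariant_Mphase:
  fixes A :: "real^3 \<Rightarrow> real^3"
  assumes h: "a\<^sup>2 + b\<^sup>2 = 1"
    and A_smooth: "smooth A"
    and curl: "\<And>x. curl A x = vector [0, 0, B0]"
  shows "tr_invariant m q v A (Mphase a b)"
proof -
  obtain G where G: "smooth G" and gauge: "\<And>x. A x + grad G x = - (Mm a b *v A (Mm a b *v x))"
    using reflection_gauge[OF h A_smooth curl] by blast
  have kinetic: "norm (- (Mm a b *v p) - c *\<^sub>R A (Mm a b *v x))
      = norm (p - c *\<^sub>R (A x + grad G x))" for p x c
  proof -
    have "- (Mm a b *v p) - c *\<^sub>R A (Mm a b *v x)
        = - (Mm a b *v (p + c *\<^sub>R (Mm a b *v A (Mm a b *v x))))"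
      by (simp add: matrix_vector_right_distrib matrix_vector_mult_scaleR Mm_Mm_mult_vector[OF h])
    then show ?thesis
      by (simp add: norm_Mm[OF h] gauge)
  qed
  have distance: "norm (Mm a b *v x - Mm a b *v y) = norm (x - y)" for x y
    by (simp add: matrix_vector_mult_diff_distrib[symmetric] norm_Mm[OF h])
  show ?thesis
    unfolding tr_invariant_def
    by (intro exI[of _ G] conjI allI G) (simp add: hamiltonian_def kinetic distance)
qed

lemma infinite_Mphase:
  "infinite {Mphase a b :: 'n::finite phase \<Rightarrow> 'n phase | a b. a\<^sup>2 + b\<^sup>2 = 1}"
proof
  define R where "R t = (Mphase t (sqrt (1 - t\<^sup>2)) :: 'n phase \<Rightarrow> 'n phase)" for t
  assume fin: "finite {Mphase a b :: 'n phase \<Rightarrow> 'n phase | a b. a\<^sup>2 + b\<^sup>2 = 1}"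
  have "R ` {0..1} \<subseteq> {Mphase a b | a b. a\<^sup>2 + b\<^sup>2 = 1}"
  proof (rule image_subsetI)
    fix t :: real
    assume "t \<in> {0..1}"
    then have "t\<^sup>2 \<le> 1"
      by (simp add: power_le_one)
    then have "t\<^sup>2 + (sqrt (1 - t\<^sup>2))\<^sup>2 = 1"
      by simp
    then show "R t \<in> {Mphase a b | a b. a\<^sup>2 + b\<^sup>2 = 1}"
      unfolding R_def by blast
  qed
  with fin have "finite (R ` {0..1})"
    by (rule finite_subset[rotated])
  moreover have "inj_on R {0..1}"
  proof (rule inj_onI)
    define \<Gamma> :: "'n phase" where "\<Gamma> = (\<chi> i. (axis 1 1, 0))"
    have "pos (R t \<Gamma>) i $ 1 = t" for t i
      unfolding R_def pos_Mphase by (simp add: \<Gamma>_def pos_def axis_def)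
    then show "R s = R t \<Longrightarrow> s = t" for s t
      by metis
  qed
  ultimately have "finite {0..1::real}"
    by (simp add: finite_image_iff)
  then show False
    using infinite_Icc[of "0::real" 1] by simp
qed

theorem mainTheorem13:
  fixes m q :: "'n::{finite,linorder} \<Rightarrow> real"
    and v :: "real \<Rightarrow> real"
    and A :: "real^3 \<Rightarrow> real^3"
    and B0 :: real
  assumes mass_pos: "\<And>i. m i > 0"
    and A_smooth: "smooth A"
    and B_const: "\<And>x. curl A x = vector [0, 0, B0]"
  shows "(\<forall>a b. a\<^sup>2 + b\<^sup>2 = 1 \<longrightarrow>
            orthogonal_matrix (Mm a b) \<and> Mm a b ** Mm a b = mat 1 \<and> det (Mm a b) = -1 \<and>
            time_reversal_op (Mphase a b :: 'n phase \<Rightarrow> 'n phase) \<and>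
            tr_invariant m q v A (Mphase a b))
         \<and> infinite {Mphase a b :: 'n phase \<Rightarrow> 'n phase | a b. a\<^sup>2 + b\<^sup>2 = 1}"
proof (intro conjI allI impI infinite_Mphase)
  fix a b :: real
  assume h: "a\<^sup>2 + b\<^sup>2 = 1"
  show "orthogonal_matrix (Mm a b)"
    by (rule orthogonal_matrix_Mm[OF h])
  show "Mm a b ** Mm a b = mat 1"
    by (rule Mm_Mm[OF h])
  show "det (Mm a b) = -1"
    by (rule det_Mm[OF h])
  show "time_reversal_op (Mphase a b :: 'n phase \<Rightarrow> 'n phase)"
    by (rule time_reversal_op_Mphase[OF h])
  show "tr_invariant m q v A (Mphase a b)"
    by (rule tr_invariant_Mphase[OF h A_smooth B_const])
qed

end
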